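(* A monomial $f\in k[x_0, \dots, x_{n+1}]$ is in $I_{B_n}^{(m)}$ if and only if \[ \min\{w_{0,S}(f), w_{n+1,S}(f)\}\geq m \quad \text{for all subtrees } S \text{ of } Q_n \text{ with } n-2 \text{ vertices}. \]
   Context: Let $k$ be a field. Let $Q_n$ be an $n$-gon in $\mathbb{R}^2$ with vertices labeled $1,\dots,n$, containing the origin and embedded in $\mathbb{R}^3$, and let $B_n=\mathrm{conv}(Q_n,(0,0,1),(0,0,-1))$ be the bipyramid over $Q_n$, whose two extra vertices $(0,0,1)$ and $(0,0,-1)$ are labeled $0$ and $n+1$. Regard $B_n$ as a simplicial complex on vertices $\{0,1,\dots,n+1\}$ and let $I_{B_n}\subset k[x_0,\dots,x_{n+1}]$ be its Stanley-Reisner ideal, i.e. the ideal generated by the squarefree monomials $\prod_{i\in\tau}x_i$ with $\tau$ a non-face of $B_n$. For a homogeneous ideal $I$, the $m$-th symbolic power is $I^{(m)}=R\cap\bigcap_{P\in \mathrm{Ass}(I)} I^mR_P$. For a subtree $S$ of the $n$-gon $Q_n$ having $n-2$ vertices and a monomial $f=x_0^{a_0}x_1^{a_1}\cdots x_{n+1}^{a_{n+1}}$, define the weights $w_{0,S}(f)=\sum_{i\in S}a_i+a_0$ and $w_{n+1,S}(f)=\sum_{i\in S}a_i+a_{n+1}$ (sums over the vertices of $S$). *)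

theory Defs
  imports Main "HOL-Library.Poly_Mapping"
begin

(* Polynomials over a field k in variables x_i (i :: nat), as finitely supported maps
  from exponent vectors to coefficients. The ring k[x_0,...,x_{n+1}] is the
  subring of those polynomials whose monomials only involve variables 0..n+1. *)

type_synonym 'k mpoly = "(nat \<Rightarrow>\<^sub>0 nat) \<Rightarrow>\<^sub>0 'k"

definition poly_ring :: "nat \<Rightarrow> ('k::field) mpoly set" where
  "poly_ring N = {p :: 'k mpoly. \<forall>mon \<in> Poly_Mapping.keys p. Poly_Mapping.keys mon \<subseteq> {..N}}"

definition monom :: "(nat \<Rightarrow>\<^sub>0 nat) \<Rightarrow> ('k::field) mpoly" where
  "monom a = Poly_Mapping.single a 1"

definition is_ideal :: "'a::comm_ring_1 set \<Rightarrow> 'a set \<Rightarrow> bool" where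
  "is_ideal R J \<longleftrightarrow> J \<subseteq> R \<and> 0 \<in> J \<and> (\<forall>x\<in>J. \<forall>y\<in>J. x + y \<in> J)
     \<and> (\<forall>r\<in>R. \<forall>x\<in>J. r * x \<in> J)"

definition ideal_gen :: "'a::comm_ring_1 set \<Rightarrow> 'a set \<Rightarrow> 'a set" where
  "ideal_gen R G = \<Inter>{J. is_ideal R J \<and> G \<subseteq> J}"

fun ideal_pow :: "'a::comm_ring_1 set \<Rightarrow> 'a set \<Rightarrow> nat \<Rightarrow> 'a set" where
  "ideal_pow R I 0 = R"
| "ideal_pow R I (Suc m) = ideal_gen R {x * y | x y. x \<in> ideal_pow R I m \<and> y \<in> I}"

definition is_prime_ideal :: "'a::comm_ring_1 set \<Rightarrow> 'a set \<Rightarrow> bool" where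
  "is_prime_ideal R P \<longleftrightarrow> is_ideal R P \<and> P \<noteq> R
     \<and> (\<forall>a\<in>R. \<forall>b\<in>R. a * b \<in> P \<longrightarrow> a \<in> P \<or> b \<in> P)"

definition ass_primes :: "'a::comm_ring_1 set \<Rightarrow> 'a set \<Rightarrow> 'a set set" where
  "ass_primes R I = {P. is_prime_ideal R P \<and> (\<exists>g\<in>R. P = {r\<in>R. r * g \<in> I})}"

(* m-th symbolic power R \<inter> \<Inter>_{P \<in> Ass I} I^m R_P, where (R a domain)
  R \<inter> I^m R_P = {f \<in> R. \<exists>s \<in> R - P. s f \<in> I^m}. *)
definition symbolic_power :: "'a::comm_ring_1 set \<Rightarrow> 'a set \<Rightarrow> nat \<Rightarrow> 'a set" where
  "symbolic_power R I m =
     {f \<in> R. \<forall>P \<in> ass_primes R I. \<exists>s \<in> R - P. s * f \<in> ideal_pow R I m}"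

(* The n-gon Q_n as the cycle graph on 1..n (vertices labelled in cyclic order). *)
definition cyc_succ :: "nat \<Rightarrow> nat \<Rightarrow> nat" where
  "cyc_succ n i = i mod n + 1"

definition cyc_adj :: "nat \<Rightarrow> nat \<Rightarrow> nat \<Rightarrow> bool" where
  "cyc_adj n i j \<longleftrightarrow> i \<in> {1..n} \<and> j \<in> {1..n} \<and> (j = cyc_succ n i \<or> i = cyc_succ n j)"

(* Vertex sets of subtrees of Q_n: nonempty vertex sets connected within the cycle
  (each such set carries a spanning tree, and every subtree has such a vertex set). *)
definition subtree_vertices :: "nat \<Rightarrow> nat set \<Rightarrow> bool" where
  "subtree_vertices n S \<longleftrightarrow> S \<noteq> {} \<and> S \<subseteq> {1..n} \<and>
     (\<forall>i\<in>S. \<forall>j\<in>S. (i, j) \<in> {(u, v). u \<in> S \<and> v \<in> S \<and> cyc_adj n u v}\<^sup>*)"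

definition bipyr_facets :: "nat \<Rightarrow> nat set set" where
  "bipyr_facets n = {{0, i, cyc_succ n i} | i. i \<in> {1..n}}
                  \<union> {{n + 1, i, cyc_succ n i} | i. i \<in> {1..n}}"

definition bipyr_face :: "nat \<Rightarrow> nat set \<Rightarrow> bool" where
  "bipyr_face n \<tau> \<longleftrightarrow> (\<exists>F \<in> bipyr_facets n. \<tau> \<subseteq> F)"

definition sqfree_monom :: "nat set \<Rightarrow> ('k::field) mpoly" where
  "sqfree_monom \<tau> = monom (\<Sum>i\<in>\<tau>. Poly_Mapping.single i 1)"

definition SR_ideal_bipyr :: "nat \<Rightarrow> ('k::field) mpoly set" where
  "SR_ideal_bipyr n = ideal_gen (poly_ring (n + 1))
     {sqfree_monom \<tau> | \<tau>. \<tau> \<subseteq> {0..n + 1} \<and> \<not> bipyr_face n \<tau>}"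

definition w0 :: "nat \<Rightarrow> nat set \<Rightarrow> (nat \<Rightarrow>\<^sub>0 nat) \<Rightarrow> nat" where
  "w0 n S a = (\<Sum>i\<in>S. Poly_Mapping.lookup a i) + Poly_Mapping.lookup a 0"

definition wn1 :: "nat \<Rightarrow> nat set \<Rightarrow> (nat \<Rightarrow>\<^sub>0 nat) \<Rightarrow> nat" where
  "wn1 n S a = (\<Sum>i\<in>S. Poly_Mapping.lookup a i) + Poly_Mapping.lookup a (n + 1)"

end

theory Submission
  imports Defs
begin

text \<open>
  The Stanley-Reisner ideal of a simplicial complex is the intersection of the monomial primes
  \<open>P\<^sub>F = (x\<^sub>j : j \<notin> F)\<close> over its facets \<open>F\<close>, and these are exactly its associated primes:
  \<open>P\<^sub>F = (I : x\<^sub>F)\<close>, because adding any vertex to a facet gives a non-face. Hence a monomial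
  lies in the \<open>m\<close>-th symbolic power iff it lies in every \<open>P\<^sub>F\<^sup>m\<close>, i.e. iff its degree outside each facet
  is at least \<open>m\<close>: one direction because \<open>I\<^sup>m \<subseteq> P\<^sub>F\<^sup>m\<close> and \<open>P\<^sub>F\<close> is prime, the other because
  \<open>x\<^sub>F\<^sup>m f\<close> is then a product of \<open>m\<close> non-face monomials \<open>x\<^sub>F x\<^sub>c\<close>, \<open>c \<notin> F\<close>.

  The facets of the bipyramid are \<open>{0, i, i+1}\<close> and \<open>{n+1, i, i+1}\<close>; their complements are
  \<open>{n+1}\<close> resp. \<open>{0}\<close> together with the \<open>n\<close>-gon minus the edge \<open>{i, i+1}\<close>, and the
  \<open>(n-2)\<close>-vertex subtrees of the \<open>n\<close>-cycle are exactly these edge complements.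
\<close>

section \<open>Polynomial rings and their ideals\<close>

lemma keys_add_nat: "Poly_Mapping.keys (a + b :: 'x \<Rightarrow>\<^sub>0 nat) = Poly_Mapping.keys a \<union> Poly_Mapping.keys b"
  by (auto simp: in_keys_iff lookup_add)

lemma poly_ring_add: "p \<in> poly_ring N \<Longrightarrow> q \<in> poly_ring N \<Longrightarrow> p + q \<in> poly_ring N"
  unfolding poly_ring_def using keys_add[of p q] by blast

lemma poly_ring_mult:
  assumes p: "p \<in> poly_ring N" and q: "q \<in> poly_ring N"
  shows "p * q \<in> poly_ring N"
  unfolding poly_ring_def mem_Collect_eq
proof
  fix mon assume "mon \<in> Poly_Mapping.keys (p * q)"
  then obtain a b where ab: "mon = a + b" "a \<in> Poly_Mapping.keys p" "b \<in> Poly_Mapping.keys q"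
    using keys_mult[of p q] by blast
  then show "Poly_Mapping.keys mon \<subseteq> {..N}"
    using p q unfolding poly_ring_def by (auto simp: keys_add_nat)
qed

lemma poly_ring_zero: "0 \<in> poly_ring N"
  unfolding poly_ring_def by simp

lemma poly_ring_one: "1 \<in> poly_ring N"
  unfolding poly_ring_def by simp

lemma poly_ring_single: "Poly_Mapping.keys k \<subseteq> {..N} \<Longrightarrow> Poly_Mapping.single k c \<in> poly_ring N"
  unfolding poly_ring_def by simp

lemma poly_ring_monom: "Poly_Mapping.keys k \<subseteq> {..N} \<Longrightarrow> monom k \<in> poly_ring N"
  unfolding monom_def by (rule poly_ring_single)

lemma poly_ring_is_ideal: "is_ideal (poly_ring N) (poly_ring N :: 'k::field mpoly set)"
  unfolding is_ideal_def using poly_ring_zero poly_ring_add poly_ring_mult by blast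

lemma ideal_sum:
  assumes "is_ideal R J" "finite A" "\<And>x. x \<in> A \<Longrightarrow> f x \<in> J"
  shows "sum f A \<in> J"
  using assms(2,3)
proof (induction A rule: finite_induct)
  case empty then show ?case using assms(1) unfolding is_ideal_def by simp
next
  case (insert x F) then show ?case using assms(1) unfolding is_ideal_def by simp
qed

lemma ideal_gen_is_ideal:
  assumes "G \<subseteq> poly_ring N"
  shows "is_ideal (poly_ring N) (ideal_gen (poly_ring N) (G :: 'k::field mpoly set))"
  unfolding is_ideal_def
proof (intro conjI ballI)
  have "poly_ring N \<in> {J. is_ideal (poly_ring N) J \<and> G \<subseteq> J}"
    using assms poly_ring_is_ideal by blast
  then show "ideal_gen (poly_ring N) G \<subseteq> poly_ring N"
    unfolding ideal_gen_def by blast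
  show "0 \<in> ideal_gen (poly_ring N) G"
    unfolding ideal_gen_def is_ideal_def by blast
  show "x + y \<in> ideal_gen (poly_ring N) G"
    if "x \<in> ideal_gen (poly_ring N) G" "y \<in> ideal_gen (poly_ring N) G" for x y
    using that unfolding ideal_gen_def is_ideal_def by blast
  show "r * x \<in> ideal_gen (poly_ring N) G"
    if "r \<in> poly_ring N" "x \<in> ideal_gen (poly_ring N) G" for r x
    using that unfolding ideal_gen_def is_ideal_def by blast
qed

lemma ideal_gen_superset: "G \<subseteq> ideal_gen R G"
  unfolding ideal_gen_def by auto

lemma ideal_gen_least: "is_ideal R J \<Longrightarrow> G \<subseteq> J \<Longrightarrow> ideal_gen R G \<subseteq> J"
  unfolding ideal_gen_def by auto

lemma monom_mult_monom: "(monom a :: 'k::field mpoly) * monom b = monom (a + b)"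
  unfolding monom_def by (simp add: mult_single)

lemma poly_mapping_sum_singles:
  "(\<Sum>k\<in>Poly_Mapping.keys p. Poly_Mapping.single k (Poly_Mapping.lookup p k)) = p"
  by (rule poly_mapping_eqI) (auto simp: lookup_sum lookup_single when_def in_keys_iff)

lemma lookup_mult_single:
  fixes p :: "'k::field mpoly"
  shows "Poly_Mapping.lookup (p * Poly_Mapping.single g c) (k + g) = Poly_Mapping.lookup p k * c"
proof -
  have "p * Poly_Mapping.single g c =
      (\<Sum>l\<in>Poly_Mapping.keys p. Poly_Mapping.single (l + g) (Poly_Mapping.lookup p l * c))"
    by (subst (1) poly_mapping_sum_singles[symmetric]) (simp add: sum_distrib_right mult_single)
  then show ?thesis
    by (auto simp: lookup_sum lookup_single when_def in_keys_iff)
qed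

lemma keys_mult_monom:
  fixes p :: "'k::field mpoly"
  shows "Poly_Mapping.keys (p * monom g) = (\<lambda>k. k + g) ` Poly_Mapping.keys p"
proof
  show "Poly_Mapping.keys (p * monom g) \<subseteq> (\<lambda>k. k + g) ` Poly_Mapping.keys p"
    using keys_mult[of p "monom g"] unfolding monom_def by auto
  show "(\<lambda>k. k + g) ` Poly_Mapping.keys p \<subseteq> Poly_Mapping.keys (p * monom g)"
    unfolding monom_def by (auto simp: in_keys_iff lookup_mult_single)
qed

definition sqfree_exp :: "nat set \<Rightarrow> (nat \<Rightarrow>\<^sub>0 nat)" where
  "sqfree_exp \<tau> = (\<Sum>i\<in>\<tau>. Poly_Mapping.single i 1)"

lemma sqfree_monom_eq: "sqfree_monom \<tau> = monom (sqfree_exp \<tau>)"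
  unfolding sqfree_monom_def sqfree_exp_def ..

lemma lookup_sqfree_exp: "finite \<tau> \<Longrightarrow> Poly_Mapping.lookup (sqfree_exp \<tau>) j = (if j \<in> \<tau> then 1 else 0)"
  unfolding sqfree_exp_def by (simp add: lookup_sum lookup_single when_def)

lemma keys_sqfree_exp: "finite \<tau> \<Longrightarrow> Poly_Mapping.keys (sqfree_exp \<tau>) = \<tau>"
  by (auto simp: in_keys_iff lookup_sqfree_exp split: if_splits)

lemma poly_ring_sqfree_monom: "\<tau> \<subseteq> {..N} \<Longrightarrow> sqfree_monom \<tau> \<in> poly_ring N"
  unfolding sqfree_monom_eq
  by (rule poly_ring_monom) (metis finite_atMost finite_subset keys_sqfree_exp)

section \<open>Powers of the prime generated by the variables outside a set\<close>

definition deg_outside :: "nat \<Rightarrow> nat set \<Rightarrow> (nat \<Rightarrow>\<^sub>0 nat) \<Rightarrow> nat" where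
  "deg_outside N F k = (\<Sum>j\<in>{..N} - F. Poly_Mapping.lookup k j)"

text \<open>This is \<open>P\<^sub>F\<^sup>m\<close>, where \<open>P\<^sub>F\<close> is generated by the variables \<open>x\<^sub>j\<close> with \<open>j \<notin> F\<close>.\<close>

definition outside_pow :: "nat \<Rightarrow> nat set \<Rightarrow> nat \<Rightarrow> 'k::field mpoly set" where
  "outside_pow N F m = {p \<in> poly_ring N. \<forall>k\<in>Poly_Mapping.keys p. m \<le> deg_outside N F k}"

lemma deg_outside_add: "deg_outside N F (a + b) = deg_outside N F a + deg_outside N F b"
  unfolding deg_outside_def by (simp add: lookup_add sum.distrib)

lemma deg_outside_pos_iff:
  assumes "Poly_Mapping.keys k \<subseteq> {..N}"
  shows "0 < deg_outside N F k \<longleftrightarrow> \<not> Poly_Mapping.keys k \<subseteq> F"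
proof
  assume "0 < deg_outside N F k"
  then obtain j where "j \<in> {..N} - F" "Poly_Mapping.lookup k j \<noteq> 0"
    unfolding deg_outside_def by (metis less_irrefl sum.neutral)
  then show "\<not> Poly_Mapping.keys k \<subseteq> F"
    by (metis DiffD2 in_keys_iff subsetD)
next
  assume "\<not> Poly_Mapping.keys k \<subseteq> F"
  then obtain j where j: "j \<in> Poly_Mapping.keys k" "j \<notin> F" by blast
  then have "Poly_Mapping.lookup k j \<le> deg_outside N F k"
    unfolding deg_outside_def using assms by (intro member_le_sum) auto
  then show "0 < deg_outside N F k"
    using j by (simp add: in_keys_iff)
qed

lemma outside_pow_0: "outside_pow N F 0 = poly_ring N"
  unfolding outside_pow_def by auto

lemma outside_pow_mult:
  assumes x: "x \<in> outside_pow N F m1" and y: "y \<in> outside_pow N F m2"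
  shows "x * y \<in> outside_pow N F (m1 + m2)"
  unfolding outside_pow_def
proof (intro CollectI conjI ballI)
  show "x * y \<in> poly_ring N"
    using x y poly_ring_mult unfolding outside_pow_def by blast
  fix k assume "k \<in> Poly_Mapping.keys (x * y)"
  then obtain a b where "k = a + b" "a \<in> Poly_Mapping.keys x" "b \<in> Poly_Mapping.keys y"
    using keys_mult[of x y] by blast
  then show "m1 + m2 \<le> deg_outside N F k"
    using x y unfolding outside_pow_def by (fastforce simp: deg_outside_add intro: add_mono)
qed

lemma outside_pow_is_ideal: "is_ideal (poly_ring N) (outside_pow N F m :: 'k::field mpoly set)"
  unfolding is_ideal_def
proof (intro conjI ballI)
  show "outside_pow N F m \<subseteq> poly_ring N" "0 \<in> outside_pow N F m"
    unfolding outside_pow_def poly_ring_def by auto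
  show "x + y \<in> outside_pow N F m" if "x \<in> outside_pow N F m" "y \<in> outside_pow N F m" for x y :: "'k mpoly"
    using that keys_add[of x y] poly_ring_add unfolding outside_pow_def by blast
  show "r * x \<in> outside_pow N F m" if "r \<in> poly_ring N" "x \<in> outside_pow N F m" for r x :: "'k mpoly"
    using outside_pow_mult[of r N F 0 x m] that by (simp add: outside_pow_0)
qed

lemma outside_pow_split:
  fixes p :: "'k::field mpoly"
  assumes p: "p \<in> poly_ring N" "p \<notin> outside_pow N F 1"
  obtains p0 p1 where "p = p0 + p1" "p0 \<in> poly_ring N" "p0 \<noteq> 0" "p1 \<in> outside_pow N F 1"
    "\<forall>k\<in>Poly_Mapping.keys p0. deg_outside N F k = 0"
proof
  define p0 :: "'k mpoly" where "p0 = Poly_Mapping.mapp (\<lambda>k c. if deg_outside N F k = 0 then c else 0) p"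
  have lookup_p0: "Poly_Mapping.lookup p0 k = (if deg_outside N F k = 0 then Poly_Mapping.lookup p k else 0)" for k
    unfolding p0_def by (auto simp: Poly_Mapping.lookup_mapp when_def in_keys_iff)
  have keys_p0: "Poly_Mapping.keys p0 \<subseteq> Poly_Mapping.keys p"
    unfolding p0_def by (rule keys_mapp_subset)
  show "p = p0 + (p - p0)" by simp
  show "p0 \<in> poly_ring N" "\<forall>k\<in>Poly_Mapping.keys p0. deg_outside N F k = 0"
    using p keys_p0 unfolding poly_ring_def by (auto simp: in_keys_iff lookup_p0 split: if_splits)
  show "p - p0 \<in> outside_pow N F 1"
    using p(1) keys_diff[of p p0] keys_p0
    by (auto simp: outside_pow_def poly_ring_def in_keys_iff lookup_minus lookup_p0 split: if_splits)
  obtain k where "k \<in> Poly_Mapping.keys p" "deg_outside N F k = 0"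
    using p unfolding outside_pow_def by auto
  then show "p0 \<noteq> 0"
    by (metis in_keys_iff lookup_p0 lookup_zero)
qed

lemma outside_pow_prime: "is_prime_ideal (poly_ring N) (outside_pow N F 1 :: 'k::field mpoly set)"
  unfolding is_prime_ideal_def
proof (intro conjI ballI impI)
  show I: "is_ideal (poly_ring N) (outside_pow N F 1 :: 'k mpoly set)"
    by (rule outside_pow_is_ideal)
  have "(1::'k mpoly) \<notin> outside_pow N F 1"
    by (simp add: outside_pow_def deg_outside_def)
  then show "outside_pow N F 1 \<noteq> (poly_ring N :: 'k mpoly set)"
    using poly_ring_one by blast
  fix a b :: "'k mpoly"
  assume a: "a \<in> poly_ring N" and b: "b \<in> poly_ring N" and ab: "a * b \<in> outside_pow N F 1"
  show "a \<in> outside_pow N F 1 \<or> b \<in> outside_pow N F 1"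
  proof (rule ccontr)
    assume neither: "\<not> ?thesis"
    then obtain a0 a1 where A: "a = a0 + a1" "a0 \<in> poly_ring N" "a0 \<noteq> 0"
        "a1 \<in> outside_pow N F 1" "\<forall>k\<in>Poly_Mapping.keys a0. deg_outside N F k = 0"
      using outside_pow_split[OF a] by blast
    obtain b0 b1 where B: "b = b0 + b1" "b0 \<in> poly_ring N" "b0 \<noteq> 0"
        "b1 \<in> outside_pow N F 1" "\<forall>k\<in>Poly_Mapping.keys b0. deg_outside N F k = 0"
      using outside_pow_split[OF b] neither by blast
    have rest: "a0 * b1 + b * a1 \<in> outside_pow N F 1"
      using I A(2,4) B(4) b unfolding is_ideal_def by blast
    have "a0 * b0 = a * b - (a0 * b1 + b * a1)"
      using A(1) B(1) by (simp add: algebra_simps)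
    then have "Poly_Mapping.keys (a0 * b0) \<subseteq> Poly_Mapping.keys (a * b) \<union> Poly_Mapping.keys (a0 * b1 + b * a1)"
      using keys_diff by metis
    then have "\<forall>k\<in>Poly_Mapping.keys (a0 * b0). 1 \<le> deg_outside N F k"
      using ab rest unfolding outside_pow_def by blast
    moreover have "\<forall>k\<in>Poly_Mapping.keys (a0 * b0). deg_outside N F k = 0"
      using keys_mult[of a0 b0] A(5) B(5) by (auto simp: deg_outside_add)
    ultimately have "Poly_Mapping.keys (a0 * b0) = {}"
      by fastforce
    then have "a0 * b0 = 0"
      by simp
    then show False
      using A(3) B(3) by simp
  qed
qed

section \<open>Stanley-Reisner ideals\<close>

definition is_face :: "nat set set \<Rightarrow> nat set \<Rightarrow> bool" where
  "is_face facets \<tau> \<longleftrightarrow> (\<exists>F\<in>facets. \<tau> \<subseteq> F)"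

definition SR_ideal :: "nat \<Rightarrow> nat set set \<Rightarrow> 'k::field mpoly set" where
  "SR_ideal N facets =
     ideal_gen (poly_ring N) {sqfree_monom \<tau> | \<tau>. \<tau> \<subseteq> {..N} \<and> \<not> is_face facets \<tau>}"

definition nonface_polys :: "nat \<Rightarrow> nat set set \<Rightarrow> 'k::field mpoly set" where
  "nonface_polys N facets =
     {p \<in> poly_ring N. \<forall>k\<in>Poly_Mapping.keys p. \<not> is_face facets (Poly_Mapping.keys k)}"

lemma is_face_mono: "is_face facets \<tau> \<Longrightarrow> \<sigma> \<subseteq> \<tau> \<Longrightarrow> is_face facets \<sigma>"
  unfolding is_face_def by blast

lemma nonface_polys_is_ideal: "is_ideal (poly_ring N) (nonface_polys N facets :: 'k::field mpoly set)"
  unfolding is_ideal_def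
proof (intro conjI ballI)
  show "nonface_polys N facets \<subseteq> poly_ring N" "0 \<in> nonface_polys N facets"
    unfolding nonface_polys_def poly_ring_def by auto
  show "x + y \<in> nonface_polys N facets"
    if "x \<in> nonface_polys N facets" "y \<in> nonface_polys N facets" for x y :: "'k mpoly"
    using that keys_add[of x y] poly_ring_add unfolding nonface_polys_def by blast
  show "r * x \<in> nonface_polys N facets"
    if r: "r \<in> poly_ring N" and x: "x \<in> nonface_polys N facets" for r x :: "'k mpoly"
    unfolding nonface_polys_def
  proof (intro CollectI conjI ballI)
    show "r * x \<in> poly_ring N"
      using x r poly_ring_mult unfolding nonface_polys_def by blast
    fix k assume "k \<in> Poly_Mapping.keys (r * x)"
    then obtain a b where "k = a + b" "b \<in> Poly_Mapping.keys x"
      using keys_mult[of r x] by blast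
    then show "\<not> is_face facets (Poly_Mapping.keys k)"
      using x is_face_mono[of facets "Poly_Mapping.keys k" "Poly_Mapping.keys b"]
      unfolding nonface_polys_def by (auto simp: keys_add_nat)
  qed
qed

lemma sqfree_monom_in_SR_ideal:
  "\<tau> \<subseteq> {..N} \<Longrightarrow> \<not> is_face facets \<tau> \<Longrightarrow> sqfree_monom \<tau> \<in> SR_ideal N facets"
  unfolding SR_ideal_def by (rule subsetD[OF ideal_gen_superset]) blast

lemma SR_ideal_is_ideal: "is_ideal (poly_ring N) (SR_ideal N facets :: 'k::field mpoly set)"
  unfolding SR_ideal_def by (rule ideal_gen_is_ideal) (auto intro: poly_ring_sqfree_monom)

text \<open>Each term \<open>c x\<^sup>k\<close> of a polynomial all of whose monomials are non-faces is a multiple of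
  the generator \<open>x\<^sub>K\<close>, \<open>K\<close> the support of \<open>k\<close>.\<close>

lemma SR_ideal_eq_nonface_polys: "SR_ideal N facets = (nonface_polys N facets :: 'k::field mpoly set)"
proof
  show "SR_ideal N facets \<subseteq> (nonface_polys N facets :: 'k mpoly set)"
    unfolding SR_ideal_def
  proof (rule ideal_gen_least[OF nonface_polys_is_ideal], safe)
    fix \<tau> assume \<tau>: "\<tau> \<subseteq> {..N}" "\<not> is_face facets \<tau>"
    then have "finite \<tau>" using finite_subset by blast
    then show "(sqfree_monom \<tau> :: 'k mpoly) \<in> nonface_polys N facets"
      using \<tau> poly_ring_sqfree_monom[OF \<tau>(1)]
      unfolding nonface_polys_def sqfree_monom_eq monom_def by (simp add: keys_sqfree_exp)
  qed
  show "nonface_polys N facets \<subseteq> (SR_ideal N facets :: 'k mpoly set)"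
  proof
    fix p :: "'k mpoly" assume p: "p \<in> nonface_polys N facets"
    have "Poly_Mapping.single k (Poly_Mapping.lookup p k) \<in> SR_ideal N facets"
      if k: "k \<in> Poly_Mapping.keys p" for k
    proof -
      define K where "K = Poly_Mapping.keys k"
      have K: "K \<subseteq> {..N}" "\<not> is_face facets K" "finite K"
        using p k unfolding nonface_polys_def poly_ring_def K_def by auto
      have "k - sqfree_exp K + sqfree_exp K = k"
        unfolding K_def
        by (rule poly_mapping_eqI) (auto simp: lookup_add lookup_minus lookup_sqfree_exp in_keys_iff)
      then have "Poly_Mapping.single k (Poly_Mapping.lookup p k) =
          (Poly_Mapping.single 0 (Poly_Mapping.lookup p k) * monom (k - sqfree_exp K)) * sqfree_monom K"
        unfolding sqfree_monom_eq monom_def by (simp add: mult_single)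
      moreover have "Poly_Mapping.keys (k - sqfree_exp K) \<subseteq> K"
        by (auto simp: in_keys_iff lookup_minus K_def)
      then have "Poly_Mapping.single 0 (Poly_Mapping.lookup p k) * monom (k - sqfree_exp K) \<in> poly_ring N"
        using K(1) by (intro poly_ring_mult poly_ring_single poly_ring_monom) auto
      moreover have "(sqfree_monom K :: 'k mpoly) \<in> SR_ideal N facets"
        using K by (intro sqfree_monom_in_SR_ideal)
      ultimately show ?thesis
        using SR_ideal_is_ideal unfolding is_ideal_def by metis
    qed
    then show "p \<in> SR_ideal N facets"
      using ideal_sum[OF SR_ideal_is_ideal finite_keys] poly_mapping_sum_singles[of p] by metis
  qed
qed

lemma SR_ideal_eq_Inter_outside_pow:
  "SR_ideal N facets = poly_ring N \<inter> (\<Inter>F\<in>facets. outside_pow N F 1 :: 'k::field mpoly set)"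
proof -
  have "\<not> is_face facets (Poly_Mapping.keys k) \<longleftrightarrow> (\<forall>F\<in>facets. 1 \<le> deg_outside N F k)"
    if "Poly_Mapping.keys k \<subseteq> {..N}" for k
    using deg_outside_pos_iff[OF that] unfolding is_face_def by (auto simp: Suc_le_eq)
  then show ?thesis
    unfolding SR_ideal_eq_nonface_polys nonface_polys_def outside_pow_def poly_ring_def by fastforce
qed

lemma ideal_pow_SR_ideal_subset:
  assumes "F \<in> facets"
  shows "ideal_pow (poly_ring N) (SR_ideal N facets :: 'k::field mpoly set) m \<subseteq> outside_pow N F m"
proof (induction m)
  case 0
  then show ?case by (simp add: outside_pow_0)
next
  case (Suc m)
  have "SR_ideal N facets \<subseteq> (outside_pow N F 1 :: 'k mpoly set)"
    using assms unfolding SR_ideal_eq_Inter_outside_pow by blast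
  then have "{x * y |x y. x \<in> ideal_pow (poly_ring N) (SR_ideal N facets :: 'k mpoly set) m
      \<and> y \<in> SR_ideal N facets} \<subseteq> outside_pow N F (Suc m)"
    using Suc outside_pow_mult[of _ N F m _ 1] by fastforce
  then show ?case
    by (simp add: ideal_gen_least[OF outside_pow_is_ideal])
qed

lemma associated_prime_subset_outside_pow:
  assumes "P \<in> ass_primes (poly_ring N) (SR_ideal N facets :: 'k::field mpoly set)"
  shows "\<exists>F\<in>facets. P \<subseteq> outside_pow N F 1"
proof -
  obtain g where prime: "is_prime_ideal (poly_ring N) P" and g: "g \<in> poly_ring N"
    and P: "P = {r \<in> poly_ring N. r * g \<in> SR_ideal N facets}"
    using assms unfolding ass_primes_def by blast
  obtain F where F: "F \<in> facets" "g \<notin> outside_pow N F 1"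
  proof (rule ccontr)
    assume "\<not> thesis"
    then have "g \<in> SR_ideal N facets"
      using that g unfolding SR_ideal_eq_Inter_outside_pow by blast
    then have "1 \<in> P"
      unfolding P using poly_ring_one by auto
    then have "P = poly_ring N"
      using prime unfolding is_prime_ideal_def is_ideal_def by (metis mult.right_neutral subsetI subset_antisym)
    then show False
      using prime unfolding is_prime_ideal_def by blast
  qed
  have "P \<subseteq> outside_pow N F 1"
  proof
    fix r assume "r \<in> P"
    then have "r \<in> poly_ring N" "r * g \<in> outside_pow N F 1"
      using F(1) unfolding P SR_ideal_eq_Inter_outside_pow by auto
    then show "r \<in> outside_pow N F 1"
      using outside_pow_prime g F(2) unfolding is_prime_ideal_def by blast
  qed
  then show ?thesis using F(1) by blast
qed

locale facet_complex =
  fixes N :: nat and facets :: "nat set set"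
  assumes facets_bounded: "F \<in> facets \<Longrightarrow> F \<subseteq> {..N}"
    and facets_antichain: "F \<in> facets \<Longrightarrow> G \<in> facets \<Longrightarrow> F \<subseteq> G \<Longrightarrow> F = G"
begin

lemma insert_not_face:
  assumes "F \<in> facets" "j \<notin> F"
  shows "\<not> is_face facets (insert j F)"
  using assms facets_antichain unfolding is_face_def by blast

lemma is_face_Un_facet_iff:
  assumes "F \<in> facets"
  shows "is_face facets (K \<union> F) \<longleftrightarrow> K \<subseteq> F"
proof
  assume "is_face facets (K \<union> F)"
  then show "K \<subseteq> F"
    using assms insert_not_face is_face_mono[of facets "K \<union> F"] by blast
next
  assume "K \<subseteq> F"
  then show "is_face facets (K \<union> F)"
    using assms unfolding is_face_def by blast
qed

lemma colon_sqfree_facet: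
  assumes F: "F \<in> facets"
  shows "{r \<in> poly_ring N. r * sqfree_monom F \<in> SR_ideal N facets} = (outside_pow N F 1 :: 'k::field mpoly set)"
proof -
  have "finite F" using facets_bounded[OF F] finite_subset by blast
  then have keys_shift: "Poly_Mapping.keys (k + sqfree_exp F) = Poly_Mapping.keys k \<union> F" for k
    by (simp add: keys_add_nat keys_sqfree_exp)
  have "r * sqfree_monom F \<in> nonface_polys N facets \<longleftrightarrow> r \<in> outside_pow N F 1"
    if r: "r \<in> poly_ring N" for r :: "'k mpoly"
  proof -
    have "r * sqfree_monom F \<in> poly_ring N"
      using r facets_bounded[OF F] by (intro poly_ring_mult poly_ring_sqfree_monom)
    then have "r * sqfree_monom F \<in> nonface_polys N facets
        \<longleftrightarrow> (\<forall>k\<in>Poly_Mapping.keys r. \<not> Poly_Mapping.keys k \<subseteq> F)"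
      unfolding nonface_polys_def sqfree_monom_eq
      by (simp add: keys_mult_monom keys_shift is_face_Un_facet_iff[OF F])
    also have "\<dots> \<longleftrightarrow> (\<forall>k\<in>Poly_Mapping.keys r. 1 \<le> deg_outside N F k)"
      using r deg_outside_pos_iff unfolding poly_ring_def by (simp add: Suc_le_eq)
    finally show ?thesis
      using r unfolding outside_pow_def by simp
  qed
  then show ?thesis
    unfolding SR_ideal_eq_nonface_polys outside_pow_def by auto
qed

lemma facet_prime_associated:
  assumes "F \<in> facets"
  shows "(outside_pow N F 1 :: 'k::field mpoly set) \<in> ass_primes (poly_ring N) (SR_ideal N facets)"
  unfolding ass_primes_def
  using outside_pow_prime colon_sqfree_facet[OF assms, symmetric]
    poly_ring_sqfree_monom[OF facets_bounded[OF assms]]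
  by blast

text \<open>Peel off one non-face generator \<open>x\<^sub>F x\<^sub>c\<close>, \<open>c \<notin> F\<close>, per power.\<close>

lemma monom_in_ideal_pow_SR_ideal:
  assumes F: "F \<in> facets" and "Poly_Mapping.keys b \<subseteq> {..N}"
    and "m \<le> deg_outside N F b" and "\<forall>f\<in>F. m \<le> Poly_Mapping.lookup b f"
  shows "(monom b :: 'k::field mpoly) \<in> ideal_pow (poly_ring N) (SR_ideal N facets) m"
  using assms(2-)
proof (induction m arbitrary: b)
  case 0
  then show ?case by (simp add: poly_ring_monom)
next
  case (Suc m)
  have "0 < deg_outside N F b"
    using Suc.prems(2) by simp
  then have "\<not> Poly_Mapping.keys b \<subseteq> F"
    using deg_outside_pos_iff[OF Suc.prems(1)] by simp
  then obtain c where c: "c \<in> Poly_Mapping.keys b" "c \<notin> F" by blast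
  define \<tau> where "\<tau> = insert c F"
  have \<tau>: "finite \<tau>" "\<tau> \<subseteq> {..N}"
    using facets_bounded[OF F] c Suc.prems(1) finite_subset unfolding \<tau>_def by auto
  define b' where "b' = b - sqfree_exp \<tau>"
  have lookup_b': "Poly_Mapping.lookup b' j = Poly_Mapping.lookup b j - (if j \<in> \<tau> then 1 else 0)" for j
    unfolding b'_def by (simp add: lookup_minus lookup_sqfree_exp[OF \<tau>(1)])
  have b: "b = b' + sqfree_exp \<tau>"
  proof (rule poly_mapping_eqI)
    fix j
    have "j \<in> \<tau> \<Longrightarrow> 1 \<le> Poly_Mapping.lookup b j"
      using c(1) Suc.prems(3) unfolding \<tau>_def by (auto simp: in_keys_iff)
    then show "Poly_Mapping.lookup b j = Poly_Mapping.lookup (b' + sqfree_exp \<tau>) j"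
      by (simp add: lookup_add lookup_b' lookup_sqfree_exp[OF \<tau>(1)])
  qed
  have keys_b': "Poly_Mapping.keys b' \<subseteq> Poly_Mapping.keys b"
    by (auto simp: in_keys_iff lookup_b')
  have "deg_outside N F (sqfree_exp \<tau>) = 1"
  proof -
    have "deg_outside N F (sqfree_exp \<tau>) = (\<Sum>j\<in>{..N} - F. if j = c then 1 else 0)"
      unfolding deg_outside_def lookup_sqfree_exp[OF \<tau>(1)] by (rule sum.cong) (auto simp: \<tau>_def)
    also have "\<dots> = 1"
      using \<tau>(2) c(2) unfolding \<tau>_def by simp
    finally show ?thesis .
  qed
  then have "m \<le> deg_outside N F b'"
    using Suc.prems(2) b deg_outside_add[of N F b' "sqfree_exp \<tau>"] by simp
  moreover have "Poly_Mapping.keys b' \<subseteq> {..N}"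
    using keys_b' Suc.prems(1) by blast
  moreover have "\<forall>f\<in>F. m \<le> Poly_Mapping.lookup b' f"
    using Suc.prems(3) by (auto simp: lookup_b' \<tau>_def)
  ultimately have "(monom b' :: 'k mpoly) \<in> ideal_pow (poly_ring N) (SR_ideal N facets) m"
    using Suc.IH by blast
  moreover have "(sqfree_monom \<tau> :: 'k mpoly) \<in> SR_ideal N facets"
    using \<tau>(2) insert_not_face[OF F c(2)] unfolding \<tau>_def by (rule sqfree_monom_in_SR_ideal)
  moreover have "(monom b :: 'k mpoly) = monom b' * sqfree_monom \<tau>"
    unfolding sqfree_monom_eq monom_mult_monom using b by simp
  ultimately show ?case
    using ideal_gen_superset by fastforce
qed

theorem monom_in_symbolic_power_SR_ideal_iff:
  assumes a: "Poly_Mapping.keys a \<subseteq> {..N}"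
  shows "(monom a :: 'k::field mpoly) \<in> symbolic_power (poly_ring N) (SR_ideal N facets) m
    \<longleftrightarrow> (\<forall>F\<in>facets. m \<le> deg_outside N F a)"
proof
  assume sym: "(monom a :: 'k mpoly) \<in> symbolic_power (poly_ring N) (SR_ideal N facets) m"
  show "\<forall>F\<in>facets. m \<le> deg_outside N F a"
  proof
    fix F assume F: "F \<in> facets"
    obtain s :: "'k mpoly" where s: "s \<in> poly_ring N" "s \<notin> outside_pow N F 1"
      "s * monom a \<in> ideal_pow (poly_ring N) (SR_ideal N facets) m"
      using sym facet_prime_associated[OF F] unfolding symbolic_power_def by blast
    obtain k where k: "k \<in> Poly_Mapping.keys s" "deg_outside N F k = 0"
      using s(1,2) unfolding outside_pow_def by auto
    have "k + a \<in> Poly_Mapping.keys (s * monom a)"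
      using k(1) by (simp add: keys_mult_monom)
    then have "m \<le> deg_outside N F (k + a)"
      using s(3) ideal_pow_SR_ideal_subset[OF F] unfolding outside_pow_def by blast
    then show "m \<le> deg_outside N F a"
      using k(2) by (simp add: deg_outside_add)
  qed
next
  assume deg: "\<forall>F\<in>facets. m \<le> deg_outside N F a"
  show "(monom a :: 'k mpoly) \<in> symbolic_power (poly_ring N) (SR_ideal N facets) m"
    unfolding symbolic_power_def
  proof (intro CollectI conjI ballI)
    show "(monom a :: 'k mpoly) \<in> poly_ring N"
      using a by (rule poly_ring_monom)
    fix P assume "P \<in> ass_primes (poly_ring N) (SR_ideal N facets :: 'k mpoly set)"
    then obtain F where F: "F \<in> facets" "P \<subseteq> outside_pow N F 1"
      using associated_prime_subset_outside_pow by blast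
    define e where "e = (\<Sum>f\<in>F. Poly_Mapping.single f m)"
    have "finite F" using facets_bounded[OF F(1)] finite_subset by blast
    then have lookup_e: "Poly_Mapping.lookup e j = (if j \<in> F then m else 0)" for j
      unfolding e_def by (simp add: lookup_sum lookup_single when_def)
    then have keys_e: "Poly_Mapping.keys e \<subseteq> {..N}" and deg_e: "deg_outside N F e = 0"
      using facets_bounded[OF F(1)] by (auto simp: in_keys_iff deg_outside_def split: if_splits)
    have "(monom e :: 'k mpoly) \<in> poly_ring N - P"
      using F(2) keys_e deg_e poly_ring_monom by (auto simp: outside_pow_def monom_def)
    moreover have "(monom (e + a) :: 'k mpoly) \<in> ideal_pow (poly_ring N) (SR_ideal N facets) m"
      using keys_e a deg deg_e F(1)
      by (intro monom_in_ideal_pow_SR_ideal) (auto simp: keys_add_nat deg_outside_add lookup_add lookup_e)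
    ultimately show "\<exists>s\<in>poly_ring N - P. s * monom a \<in> ideal_pow (poly_ring N) (SR_ideal N facets) m"
      by (intro bexI[of _ "monom e"]) (simp_all add: monom_mult_monom)
  qed
qed

end

section \<open>The bipyramid\<close>

lemma cyc_succ_eq: "i \<in> {1..n} \<Longrightarrow> cyc_succ n i = (if i = n then 1 else i + 1)"
  unfolding cyc_succ_def by auto

lemma SR_ideal_bipyr_eq: "SR_ideal_bipyr n = SR_ideal (n + 1) (bipyr_facets n)"
  unfolding SR_ideal_bipyr_def SR_ideal_def bipyr_face_def is_face_def atLeast0AtMost ..

lemma bipyr_facets_cases:
  assumes "F \<in> bipyr_facets n"
  obtains i where "i \<in> {1..n}" "F = {0, i, cyc_succ n i}"
    | i where "i \<in> {1..n}" "F = {n + 1, i, cyc_succ n i}"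
  using assms unfolding bipyr_facets_def by blast

lemma bipyr_facet_props:
  assumes "n \<ge> 3" "F \<in> bipyr_facets n"
  shows "F \<subseteq> {..n + 1}" "finite F" "card F = 3"
  using assms(2) by (cases rule: bipyr_facets_cases; use assms(1) in \<open>auto simp: cyc_succ_eq\<close>)+

lemma facet_complex_bipyr:
  assumes "n \<ge> 3"
  shows "facet_complex (n + 1) (bipyr_facets n)"
proof
  show "F \<subseteq> {..n + 1}" if "F \<in> bipyr_facets n" for F
    using bipyr_facet_props[OF assms that] by blast
  show "F = G" if "F \<in> bipyr_facets n" "G \<in> bipyr_facets n" "F \<subseteq> G" for F G
    using card_subset_eq[of G F] bipyr_facet_props[OF assms] that by metis
qed

lemma deg_outside_bipyr_facet_top:
  assumes "i \<in> {1..n}"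
  shows "deg_outside (n + 1) {0, i, cyc_succ n i} a = wn1 n ({1..n} - {i, cyc_succ n i}) a"
proof -
  have "{..n + 1} - {0, i, cyc_succ n i} = insert (n + 1) ({1..n} - {i, cyc_succ n i})"
    using assms cyc_succ_eq[OF assms] by auto
  then show ?thesis
    unfolding deg_outside_def wn1_def by (simp add: add.commute)
qed

lemma deg_outside_bipyr_facet_bottom:
  assumes "i \<in> {1..n}"
  shows "deg_outside (n + 1) {n + 1, i, cyc_succ n i} a = w0 n ({1..n} - {i, cyc_succ n i}) a"
proof -
  have "{..n + 1} - {n + 1, i, cyc_succ n i} = insert 0 ({1..n} - {i, cyc_succ n i})"
    using assms cyc_succ_eq[OF assms] by auto
  then show ?thesis
    unfolding deg_outside_def w0_def by (simp add: add.commute)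
qed

lemma card_edge_complement:
  assumes "n \<ge> 3" "i \<in> {1..n}"
  shows "card ({1..n} - {i, cyc_succ n i}) = n - 2"
proof -
  have "card {i, cyc_succ n i} = 2" "{i, cyc_succ n i} \<subseteq> {1..n}"
    using assms cyc_succ_eq[OF assms(2)] by auto
  then show ?thesis
    by (simp add: card_Diff_subset)
qed

lemma edge_complement_subtree:
  assumes n: "n \<ge> 3" and i: "i \<in> {1..n}"
  defines "S \<equiv> {1..n} - {i, cyc_succ n i}"
  shows "subtree_vertices n S"
proof -
  define Rel where "Rel = {(u, v). u \<in> S \<and> v \<in> S \<and> cyc_adj n u v}"
  have succ_i: "cyc_succ n i = (if i = n then 1 else i + 1)"
    using cyc_succ_eq[OF i] .
  define \<phi> where "\<phi> t = (if i + t \<le> n then i + t else i + t - n)" for t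
  have \<phi>_in_S: "\<phi> t \<in> S" if "t \<in> {2..n-1}" for t
    using that i n unfolding \<phi>_def S_def succ_i by auto
  have \<phi>_step: "(\<phi> t, \<phi> (Suc t)) \<in> Rel" if "t \<in> {2..n-2}" for t
  proof -
    have "\<phi> t \<in> S" "\<phi> (Suc t) \<in> S"
      using \<phi>_in_S that n by auto
    moreover from this have "\<phi> t \<in> {1..n}"
      unfolding S_def by blast
    then have "\<phi> (Suc t) = cyc_succ n (\<phi> t)"
      using that i n by (subst cyc_succ_eq) (auto simp: \<phi>_def)
    ultimately show ?thesis
      unfolding Rel_def cyc_adj_def S_def by auto
  qed
  have reach: "(\<phi> 2, \<phi> t) \<in> Rel\<^sup>*" if "t \<in> {2..n-1}" for t
    using that
  proof (induction t)
    case (Suc t)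
    show ?case
    proof (cases "t < 2")
      case True
      with Suc.prems show ?thesis by (simp add: numeral_2_eq_2 less_Suc_eq)
    next
      case False
      with Suc have "(\<phi> 2, \<phi> t) \<in> Rel\<^sup>*" "(\<phi> t, \<phi> (Suc t)) \<in> Rel"
        using \<phi>_step by auto
      then show ?thesis by simp
    qed
  qed simp
  have onto: "\<exists>t\<in>{2..n-1}. x = \<phi> t" if "x \<in> S" for x
  proof (cases "x > i")
    case True
    then show ?thesis using that i n unfolding S_def succ_i \<phi>_def
      by (intro bexI[of _ "x - i"]) (auto split: if_splits)
  next
    case False
    then show ?thesis using that i n unfolding S_def succ_i \<phi>_def
      by (intro bexI[of _ "x + n - i"]) (auto split: if_splits)
  qed
  have "sym Rel"
    unfolding Rel_def sym_def cyc_adj_def by auto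
  then have "(x, y) \<in> Rel\<^sup>*" if "x \<in> S" "y \<in> S" for x y
    using reach onto[OF that(1)] onto[OF that(2)] sym_rtrancl[of Rel]
    by (metis rtrancl_trans symD)
  moreover have "\<phi> 2 \<in> S"
    using \<phi>_in_S n by simp
  ultimately show ?thesis
    unfolding subtree_vertices_def Rel_def S_def by auto
qed

lemma cyc_adj_arc:
  assumes "u \<in> {1..n}" "v \<in> {1..n}" "u < x" "x < v" "cyc_adj n x y" "y \<noteq> u" "y \<noteq> v"
  shows "u < y \<and> y < v"
  using assms cyc_succ_eq[of x n] cyc_succ_eq[of y n] unfolding cyc_adj_def
  by (auto split: if_splits)

lemma subtree_card_eq_edge_complement:
  assumes n: "n \<ge> 3" and S: "subtree_vertices n S" "card S = n - 2"
  shows "\<exists>i\<in>{1..n}. S = {1..n} - {i, cyc_succ n i}"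
proof -
  define Rel where "Rel = {(u, v). u \<in> S \<and> v \<in> S \<and> cyc_adj n u v}"
  have S_sub: "S \<subseteq> {1..n}" and conn: "\<And>x y. x \<in> S \<Longrightarrow> y \<in> S \<Longrightarrow> (x, y) \<in> Rel\<^sup>*"
    using S(1) unfolding subtree_vertices_def Rel_def by auto
  have "card ({1..n} - S) = 2"
    using S_sub S(2) n by (simp add: card_Diff_subset finite_subset)
  then obtain u v where uv: "{1..n} - S = {u, v}" "u < v"
    by (auto simp: card_2_iff) (metis insert_commute linorder_neqE_nat)
  then have uv_range: "u \<in> {1..n}" "v \<in> {1..n}" and S_eq: "S = {1..n} - {u, v}"
    using S_sub by auto
  consider "v = u + 1" | "u = 1" "v = n" | "v \<noteq> u + 1" "\<not> (u = 1 \<and> v = n)"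
    by blast
  then show ?thesis
  proof cases
    case 1
    then show ?thesis
      using uv_range S_eq cyc_succ_eq[OF uv_range(1)] by (intro bexI[of _ u]) auto
  next
    case 2
    then show ?thesis
      using uv_range S_eq cyc_succ_eq[of n n] n by (intro bexI[of _ n]) auto
  next
    case 3
    txt \<open>Both arcs of the cycle between \<open>u\<close> and \<open>v\<close> meet \<open>S\<close>, but no path in \<open>S\<close> passes \<open>u\<close> or \<open>v\<close>.\<close>
    have inner: "u + 1 \<in> S"
      using 3 uv uv_range S_eq by auto
    obtain outer where "outer \<in> S" "outer < u \<or> v < outer"
      using 3 uv uv_range S_eq n
      by (metis One_nat_def Diff_iff atLeastAtMost_iff insertE le_antisym le_refl
          linorder_not_le order_trans singletonD)
    moreover have "u < y \<and> y < v" if "(u + 1, y) \<in> Rel\<^sup>*" for y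
      using that
    proof (induction rule: rtrancl_induct)
      case base
      then show ?case using 3 uv by auto
    next
      case (step y z)
      then show ?case
        using cyc_adj_arc[OF uv_range] S_eq unfolding Rel_def by auto
    qed
    ultimately show ?thesis
      using conn[OF inner] by fastforce
  qed
qed

lemma subtree_card_iff:
  assumes "n \<ge> 3"
  shows "subtree_vertices n S \<and> card S = n - 2 \<longleftrightarrow> (\<exists>i\<in>{1..n}. S = {1..n} - {i, cyc_succ n i})"
  using subtree_card_eq_edge_complement[OF assms] edge_complement_subtree[OF assms]
    card_edge_complement[OF assms] by blast

theorem proposition3p6:
  fixes n m :: nat and a :: "nat \<Rightarrow>\<^sub>0 nat"
  assumes "n \<ge> 3"
    and "Poly_Mapping.keys a \<subseteq> {..n + 1}"
  shows "(monom a :: 'k::field mpoly) \<in> symbolic_power (poly_ring (n + 1)) (SR_ideal_bipyr n) m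
    \<longleftrightarrow> (\<forall>S. subtree_vertices n S \<and> card S = n - 2 \<longrightarrow> min (w0 n S a) (wn1 n S a) \<ge> m)"
proof -
  have "(monom a :: 'k mpoly) \<in> symbolic_power (poly_ring (n + 1)) (SR_ideal_bipyr n) m
      \<longleftrightarrow> (\<forall>F\<in>bipyr_facets n. m \<le> deg_outside (n + 1) F a)"
    unfolding SR_ideal_bipyr_eq
    by (rule facet_complex.monom_in_symbolic_power_SR_ideal_iff[OF facet_complex_bipyr[OF assms(1)] assms(2)])
  also have "\<dots> \<longleftrightarrow> (\<forall>i\<in>{1..n}. m \<le> deg_outside (n + 1) {n + 1, i, cyc_succ n i} a
                                  \<and> m \<le> deg_outside (n + 1) {0, i, cyc_succ n i} a)"
    unfolding bipyr_facets_def by blast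
  also have "\<dots> \<longleftrightarrow> (\<forall>i\<in>{1..n}. m \<le> w0 n ({1..n} - {i, cyc_succ n i}) a
                                  \<and> m \<le> wn1 n ({1..n} - {i, cyc_succ n i}) a)"
    by (intro ball_cong refl)
      (simp only: deg_outside_bipyr_facet_top deg_outside_bipyr_facet_bottom)
  also have "\<dots> \<longleftrightarrow> (\<forall>S. subtree_vertices n S \<and> card S = n - 2 \<longrightarrow> min (w0 n S a) (wn1 n S a) \<ge> m)"
    using subtree_card_iff[OF assms(1)] by auto
  finally show ?thesis .
qed

end
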